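(* Let $H$ be a complex Hilbert space and let $A,K\in B(H)$ be such that $A$ is positive and $(AK)^*$ is hyponormal. Then \[|\langle AKx,x\rangle|\leq \|K\|\,\langle Ax,x\rangle\] for all $x\in H$.
   Context: $B(H)$ denotes the algebra of bounded linear operators on $H$. An operator $A\in B(H)$ is positive if $\langle Ax,x\rangle\geq 0$ for all $x\in H$. An operator $T\in B(H)$ is hyponormal if $TT^*\leq T^*T$, i.e. $T^*T-TT^*$ is positive. *)

theory Defs
  imports "HOL-Analysis.Analysis"
begin

class complex_inner = real_normed_vector +
  fixes scaleC :: "complex \<Rightarrow> 'a \<Rightarrow> 'a"
    and cinner :: "'a \<Rightarrow> 'a \<Rightarrow> complex"
  assumes scaleC_add_right: "scaleC c (x + y) = scaleC c x + scaleC c y"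
    and scaleC_add_left: "scaleC (c + d) x = scaleC c x + scaleC d x"
    and scaleC_scaleC: "scaleC c (scaleC d x) = scaleC (c * d) x"
    and scaleC_one: "scaleC 1 x = x"
    and scaleR_scaleC: "scaleR r x = scaleC (complex_of_real r) x"
    and cinner_commute: "cinner x y = cnj (cinner y x)"
    and cinner_add_left: "cinner (x + y) z = cinner x z + cinner y z"
    and cinner_scaleC_left: "cinner (scaleC c x) y = c * cinner x y"
    and cinner_self_nonneg: "0 \<le> Re (cinner x x)"
    and cinner_self_eq_zero: "cinner x x = 0 \<longleftrightarrow> x = 0"
    and norm_eq_sqrt_cinner: "norm x = sqrt (Re (cinner x x))"

class chilbert_space = complex_inner + complete_space

definition bounded_clinear :: "('a::complex_inner \<Rightarrow> 'a) \<Rightarrow> bool" where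
  "bounded_clinear T \<longleftrightarrow> bounded_linear T \<and> (\<forall>c x. T (scaleC c x) = scaleC c (T x))"

definition cadjoint :: "('a::complex_inner \<Rightarrow> 'a) \<Rightarrow> ('a \<Rightarrow> 'a)" where
  "cadjoint T = (THE S. \<forall>x y. cinner (T x) y = cinner x (S y))"

definition positive_op :: "('a::complex_inner \<Rightarrow> 'a) \<Rightarrow> bool" where
  "positive_op A \<longleftrightarrow> (\<forall>x. Im (cinner (A x) x) = 0 \<and> 0 \<le> Re (cinner (A x) x))"

definition hyponormal :: "('a::complex_inner \<Rightarrow> 'a) \<Rightarrow> bool" where
  "hyponormal T \<longleftrightarrow> positive_op (\<lambda>x. cadjoint T (T x) - T (cadjoint T x))"

end

(*
  Let T = (AK)^*, so T^* = AK. Hyponormality gives |AKx| = |T^* x| <= |Tx|, and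
  |Tx|^2 = <AKTx, x> = <KTx, Ax> <= |K| |Tx| |Ax|, hence |AKx| <= |K| |Ax|.
  By Douglas' lemma this domination yields V with |V| <= |K| and (AK)^* = AV,
  i.e. K^* A = AV. Then P = VK satisfies AP = K^* A K, so P is symmetric for the
  semi-inner product [x, y] = <Ax, y>, and |P| <= |K|^2. The sequence [P^j x, P^j x]
  is log-convex (Cauchy-Schwarz for [.,.]) and grows at most like |K|^(4j), so its
  ratio is at most |K|^4; Cauchy-Schwarz then gives <AKx, Kx> = [Px, x] <= |K|^2 [x, x],
  and once more |<AKx, x>|^2 <= <AKx, Kx> <Ax, x> <= |K|^2 <Ax, x>^2.
*)

theory Submission
  imports Defs
begin

lemma cinner_add_right: "cinner (x::'a::complex_inner) (y + z) = cinner x y + cinner x z"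
  by (metis cinner_commute cinner_add_left complex_cnj_add)

lemma cinner_scaleC_right: "cinner (x::'a::complex_inner) (scaleC c y) = cnj c * cinner x y"
  by (metis cinner_commute cinner_scaleC_left complex_cnj_mult)

lemma cinner_zero_left [simp]: "cinner 0 (x::'a::complex_inner) = 0"
  using cinner_add_left[of 0 0 x] by simp

lemma cinner_zero_right [simp]: "cinner (x::'a::complex_inner) 0 = 0"
  using cinner_add_right[of x 0 0] by simp

lemma cinner_minus_left: "cinner (- x) (y::'a::complex_inner) = - cinner x y"
  using cinner_add_left[of x "-x" y] by (metis neg_eq_iff_add_eq_0 add.right_inverse cinner_zero_left)

lemma cinner_diff_left: "cinner (x - y) (z::'a::complex_inner) = cinner x z - cinner y z"
  using cinner_add_left[of x "-y" z] cinner_minus_left[of y z] by simp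

lemma cinner_minus_right: "cinner (x::'a::complex_inner) (- y) = - cinner x y"
  by (metis cinner_commute cinner_minus_left complex_cnj_minus)

lemma cinner_diff_right: "cinner (x::'a::complex_inner) (y - z) = cinner x y - cinner x z"
  using cinner_add_right[of x y "-z"] cinner_minus_right[of x z] by simp

lemma cinner_scaleR_left: "cinner (scaleR r x) (y::'a::complex_inner) = complex_of_real r * cinner x y"
  by (simp add: scaleR_scaleC cinner_scaleC_left)

lemma Im_cinner_self [simp]: "Im (cinner (x::'a::complex_inner) x) = 0"
proof -
  have "Im (cinner x x) = Im (cnj (cinner x x))" using cinner_commute[of x x] by simp
  then show ?thesis by simp
qed

lemma power2_norm_eq_cinner: "(norm (x::'a::complex_inner))^2 = Re (cinner x x)"
  using norm_eq_sqrt_cinner[of x] cinner_self_nonneg[of x] by simp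

lemma cinner_self_eq_norm: "cinner (x::'a::complex_inner) x = complex_of_real ((norm x)^2)"
  by (simp add: power2_norm_eq_cinner complex_eq_iff)

lemma eq_0_if_orthogonal_to_all: "(\<And>x. cinner x (y::'a::complex_inner) = 0) \<Longrightarrow> y = 0"
  using cinner_self_eq_zero by blast

lemma cmod_sq_le_if_quadratic_nonneg:
  fixes a b :: real and c :: complex
  assumes "\<And>t::complex. 0 \<le> a - 2 * Re (cnj t * c) + (cmod t)^2 * b"
    and "0 \<le> b"
  shows "(cmod c)^2 \<le> a * b"
proof (cases "b = 0")
  case True
  have linear_nonneg: "0 \<le> a - 2 * s * (cmod c)^2" for s :: real
  proof -
    have "cnj (complex_of_real s * c) * c = complex_of_real (s * (cmod c)^2)"
      by (simp add: complex_norm_square[symmetric] mult.commute mult.left_commute)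
    then show ?thesis using assms(1)[of "complex_of_real s * c"] True
      by (simp only: Re_complex_of_real)
  qed
  show ?thesis
  proof (rule ccontr)
    assume "\<not> ?thesis"
    then have "(cmod c)^2 > 0" using True by simp
    then show False using linear_nonneg[of "(a + 1) / (2 * (cmod c)^2)"] by (simp add: field_simps)
  qed
next
  case False
  then have b_pos: "b > 0" using assms(2) by simp
  have "cnj (c / complex_of_real b) * c = (c * cnj c) / complex_of_real b"
    by (simp add: mult.commute)
  also have "\<dots> = complex_of_real ((cmod c)^2 / b)"
    by (simp only: complex_norm_square[symmetric] of_real_divide)
  finally have "Re (cnj (c / complex_of_real b) * c) = (cmod c)^2 / b"
    by (simp only: Re_complex_of_real)
  moreover have "(cmod (c / complex_of_real b))^2 * b = (cmod c)^2 / b"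
    using b_pos by (simp add: norm_divide power_divide power2_eq_square)
  ultimately have "0 \<le> a - (cmod c)^2 / b"
    using assms(1)[of "c / complex_of_real b"] by linarith
  then show ?thesis using b_pos by (simp add: field_simps)
qed

lemma bounded_clinear_add: "bounded_clinear A \<Longrightarrow> A (x + y) = A x + A y"
  unfolding bounded_clinear_def by (simp add: linear_simps)

lemma bounded_clinear_diff: "bounded_clinear A \<Longrightarrow> A (x - y) = A x - A y"
  unfolding bounded_clinear_def by (simp add: linear_simps)

lemma bounded_clinear_scaleC: "bounded_clinear A \<Longrightarrow> A (scaleC c x) = scaleC c (A x)"
  unfolding bounded_clinear_def by simp

lemma bounded_clinear_bounded_linear: "bounded_clinear A \<Longrightarrow> bounded_linear A"
  unfolding bounded_clinear_def by simp

lemma bounded_clinear_id: "bounded_clinear id"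
  unfolding bounded_clinear_def by (simp add: bounded_linear_ident[unfolded id_def] id_def)

lemma bounded_clinear_compose:
  "bounded_clinear A \<Longrightarrow> bounded_clinear K \<Longrightarrow> bounded_clinear (A \<circ> K)"
  unfolding bounded_clinear_def
  by (auto simp: bounded_linear_compose[of A K, unfolded o_def[symmetric]])

lemma norm_le_onorm: "bounded_clinear A \<Longrightarrow> norm (A x) \<le> onorm A * norm x"
  by (rule onorm[OF bounded_clinear_bounded_linear])

lemma onorm_nonneg: "bounded_clinear A \<Longrightarrow> 0 \<le> onorm A"
  by (rule onorm_pos_le[OF bounded_clinear_bounded_linear])

lemma positive_op_Re_nonneg: "positive_op A \<Longrightarrow> 0 \<le> Re (cinner (A x) x)"
  unfolding positive_op_def by simp

lemma positive_op_id: "positive_op id"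
  unfolding positive_op_def by (simp add: cinner_self_nonneg)

lemma positive_op_self_adjoint:
  fixes A :: "'a::complex_inner \<Rightarrow> 'a"
  assumes "bounded_clinear A" "positive_op A"
  shows "cinner (A x) y = cinner x (A y)"
proof -
  define a where "a = cinner (A x) y"
  define b where "b = cinner (A y) x"
  have real: "\<And>z. Im (cinner (A z) z) = 0" using assms(2) unfolding positive_op_def by simp
  have "Im (cinner (A (x + y)) (x + y)) = 0" by (rule real)
  then have "Im (cinner (A x) x) + Im a + Im b + Im (cinner (A y) y) = 0"
    unfolding a_def b_def using assms(1)
    by (simp add: bounded_clinear_add cinner_add_left cinner_add_right)
  then have Im_sum: "Im a + Im b = 0" using real[of x] real[of y] by simp
  have "Im (cinner (A (x + scaleC \<i> y)) (x + scaleC \<i> y)) = 0" by (rule real)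
  then have "Im (cinner (A x) x + (- \<i>) * a + \<i> * b + cinner (A y) y) = 0"
    unfolding a_def b_def using assms(1)
    by (simp add: bounded_clinear_add bounded_clinear_scaleC cinner_add_left cinner_add_right
        cinner_scaleC_left cinner_scaleC_right algebra_simps)
  then have Re_diff: "Re b - Re a = 0" using real[of x] real[of y] by simp
  have "b = cnj a" using Im_sum Re_diff by (simp add: complex_eq_iff)
  then show ?thesis unfolding a_def b_def by (metis cinner_commute complex_cnj_cnj)
qed

lemma positive_op_Cauchy_Schwarz:
  fixes A :: "'a::complex_inner \<Rightarrow> 'a"
  assumes "bounded_clinear A" "positive_op A"
  shows "(cmod (cinner (A u) v))^2 \<le> Re (cinner (A u) u) * Re (cinner (A v) v)"
proof (rule cmod_sq_le_if_quadratic_nonneg)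
  show "0 \<le> Re (cinner (A v) v)" using assms(2) by (rule positive_op_Re_nonneg)
  fix t :: complex
  define a where "a = cinner (A u) v"
  have "cinner (A v) u = cnj a"
    unfolding a_def by (metis assms cinner_commute positive_op_self_adjoint)
  then have "cinner (A (u - scaleC t v)) (u - scaleC t v) =
      cinner (A u) u - (cnj t * a + cnj (cnj t * a)) + (t * cnj t) * cinner (A v) v"
    unfolding a_def using assms(1)
    by (simp add: bounded_clinear_diff bounded_clinear_scaleC cinner_diff_left cinner_diff_right
        cinner_scaleC_left cinner_scaleC_right algebra_simps)
  also have "\<dots> = cinner (A u) u - complex_of_real (2 * Re (cnj t * a))
      + complex_of_real ((cmod t)^2) * cinner (A v) v"
    by (simp only: complex_add_cnj complex_norm_square)
  finally have "Re (cinner (A (u - scaleC t v)) (u - scaleC t v)) =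
      Re (cinner (A u) u) - 2 * Re (cnj t * a) + (cmod t)^2 * Re (cinner (A v) v)"
    by simp
  moreover have "0 \<le> Re (cinner (A (u - scaleC t v)) (u - scaleC t v))"
    using assms(2) by (rule positive_op_Re_nonneg)
  ultimately show "0 \<le> Re (cinner (A u) u) - 2 * Re (cnj t * a) + (cmod t)^2 * Re (cinner (A v) v)"
    by linarith
qed

lemma cinner_Cauchy_Schwarz: "cmod (cinner (x::'a::complex_inner) y) \<le> norm x * norm y"
proof -
  have "(cmod (cinner x y))^2 \<le> Re (cinner x x) * Re (cinner y y)"
    using positive_op_Cauchy_Schwarz[OF bounded_clinear_id positive_op_id, of x y] by simp
  also have "\<dots> = (norm x * norm y)^2" by (simp add: power2_norm_eq_cinner power_mult_distrib)
  finally show ?thesis by (rule power2_le_imp_le) simp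
qed

lemma Re_cinner_le_onorm: "bounded_clinear A \<Longrightarrow> Re (cinner (A x) x) \<le> onorm A * (norm x)^2"
  using complex_Re_le_cmod[of "cinner (A x) x"] cinner_Cauchy_Schwarz[of "A x" x]
    mult_right_mono[OF norm_le_onorm[of A x], of "norm x"]
  by (simp add: power2_eq_square mult.assoc)

lemma bounded_linear_cinner_left: "bounded_linear (\<lambda>x. cinner x (y::'a::complex_inner))"
  by (rule bounded_linear_intro[of _ "norm y"])
    (simp_all add: cinner_add_left cinner_scaleR_left scaleR_conv_of_real cinner_Cauchy_Schwarz)

lemma parallelogram_law:
  "(norm (a + b))^2 + (norm (a - b))^2 = 2 * (norm (a::'a::complex_inner))^2 + 2 * (norm b)^2"
  by (simp add: power2_norm_eq_cinner cinner_add_left cinner_add_right cinner_diff_left cinner_diff_right)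

lemma Cauchy_if_norms_approach_inf:
  fixes w :: "nat \<Rightarrow> 'a::complex_inner"
  assumes mid: "\<And>m n. d \<le> norm ((1/2) *\<^sub>R (w m + w n))" and "0 \<le> d"
    and approx: "\<And>n. (norm (w n))^2 < d^2 + inverse (real (Suc n))"
  shows "Cauchy w"
proof (rule metric_CauchyI)
  have dist_sq: "(norm (w m - w n))^2 \<le> 2 * inverse (real (Suc m)) + 2 * inverse (real (Suc n))" for m n
  proof -
    have "(2 * d)^2 \<le> (norm (w m + w n))^2"
      using mid[of m n] \<open>0 \<le> d\<close> by (intro power_mono) auto
    then show ?thesis
      using parallelogram_law[of "w m" "w n"] approx[of m] approx[of n] by (simp add: power_mult_distrib)
  qed
  fix e :: real assume e: "0 < e"
  obtain M where M: "inverse (real (Suc M)) < e^2 / 4"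
    using reals_Archimedean[of "e^2/4"] e by auto
  show "\<exists>M. \<forall>m\<ge>M. \<forall>n\<ge>M. dist (w m) (w n) < e"
  proof (intro exI allI impI)
    fix m n assume "M \<le> m" "M \<le> n"
    then have "inverse (real (Suc m)) \<le> inverse (real (Suc M))" "inverse (real (Suc n)) \<le> inverse (real (Suc M))"
      by (simp_all add: le_imp_inverse_le)
    then have "(dist (w m) (w n))^2 < e^2"
      using dist_sq[of m n] M unfolding dist_norm by linarith
    then show "dist (w m) (w n) < e" by (rule power2_less_imp_less) (use e in simp)
  qed
qed

lemma minimizing_sequence_norm:
  fixes C :: "'a::real_normed_vector set"
  assumes "C \<noteq> {}"
  obtains w where "\<And>n. w n \<in> C" "\<And>n. (norm (w n))^2 < (Inf (norm ` C))^2 + inverse (real (Suc n))"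
proof -
  define d where "d = Inf (norm ` C)"
  have "0 \<le> d" unfolding d_def using assms by (intro cInf_greatest) auto
  have "\<exists>w. w \<in> C \<and> (norm w)^2 < d^2 + inverse (real (Suc n))" for n
  proof -
    have "sqrt (d^2) < sqrt (d^2 + inverse (real (Suc n)))" by (rule real_sqrt_less_mono) simp
    then have "d < sqrt (d^2 + inverse (real (Suc n)))" using \<open>0 \<le> d\<close> by simp
    then obtain w where "w \<in> C" "norm w < sqrt (d^2 + inverse (real (Suc n)))"
      using cInf_lessD[of "norm ` C"] assms unfolding d_def by auto
    moreover from this(2) have "(norm w)^2 < (sqrt (d^2 + inverse (real (Suc n))))^2"
      by (intro power_strict_mono) auto
    then have "(norm w)^2 < d^2 + inverse (real (Suc n))" by simp
    ultimately show ?thesis by blast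
  qed
  then have "\<forall>n. \<exists>w. w \<in> C \<and> (norm w)^2 < d^2 + inverse (real (Suc n))" by blast
  from choice[OF this] show ?thesis using that unfolding d_def by blast
qed

lemma closed_convex_attains_min_norm:
  fixes C :: "'a::chilbert_space set"
  assumes "closed C" "convex C" "C \<noteq> {}"
  obtains u where "u \<in> C" "\<And>w. w \<in> C \<Longrightarrow> norm u \<le> norm w"
proof -
  define d where "d = Inf (norm ` C)"
  have "bdd_below (norm ` C)" by (rule bdd_belowI[of _ 0]) auto
  then have d_le: "d \<le> norm w" if "w \<in> C" for w
    unfolding d_def using that by (simp add: cInf_lower)
  have d_nonneg: "0 \<le> d" unfolding d_def using assms(3) by (intro cInf_greatest) auto
  obtain w where w_in: "\<And>n. w n \<in> C"
    and approx: "\<And>n. (norm (w n))^2 < d^2 + inverse (real (Suc n))"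
    using minimizing_sequence_norm[OF assms(3)] unfolding d_def by blast
  have "d \<le> norm ((1/2) *\<^sub>R (w m + w n))" for m n
  proof (rule d_le)
    have "(1/2) *\<^sub>R w m + (1/2) *\<^sub>R w n \<in> C" using assms(2) w_in unfolding convex_def by auto
    then show "(1/2) *\<^sub>R (w m + w n) \<in> C" by (simp add: scaleR_add_right)
  qed
  then have "Cauchy w" using d_nonneg approx by (rule Cauchy_if_norms_approach_inf)
  then have "convergent w" by (rule Cauchy_convergent)
  then obtain u where lim: "w \<longlonglongrightarrow> u" unfolding convergent_def by blast
  have "u \<in> C" using assms(1) w_in lim by (rule closed_sequentially)
  moreover have "(norm u)^2 \<le> d^2 + 0"
  proof (rule LIMSEQ_le)
    show "(\<lambda>n. (norm (w n))^2) \<longlonglongrightarrow> (norm u)^2" using lim by (intro tendsto_intros)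
    show "(\<lambda>n. d^2 + inverse (real (Suc n))) \<longlonglongrightarrow> d^2 + 0"
      by (intro tendsto_intros LIMSEQ_inverse_real_of_nat)
    show "\<exists>N. \<forall>n\<ge>N. (norm (w n))^2 \<le> d^2 + inverse (real (Suc n))"
      using approx less_imp_le by blast
  qed
  then have "(norm u)^2 \<le> d^2" by simp
  then have "norm u \<le> d" using d_nonneg by (rule power2_le_imp_le)
  ultimately show ?thesis using that d_le by fastforce
qed

lemma cinner_eq_0_if_norm_minimal:
  fixes u z :: "'a::complex_inner"
  assumes "\<And>t. norm u \<le> norm (u + scaleC t z)"
  shows "cinner z u = 0"
proof -
  define a where "a = cinner z u"
  have "(cmod a)^2 \<le> 0 * Re (cinner z z)"
  proof (rule cmod_sq_le_if_quadratic_nonneg)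
    show "0 \<le> Re (cinner z z)" by (rule cinner_self_nonneg)
    fix s :: complex
    define t where "t = - cnj s"
    have "cinner u z = cnj a" unfolding a_def by (rule cinner_commute)
    then have "cinner (u + scaleC t z) (u + scaleC t z) =
        cinner u u + (t * a + cnj (t * a)) + (cnj t * t) * cinner z z"
      unfolding a_def
      by (simp add: cinner_add_left cinner_add_right cinner_scaleC_left cinner_scaleC_right algebra_simps)
    also have "\<dots> = cinner u u + complex_of_real (2 * Re (t * a))
        + complex_of_real ((cmod t)^2) * cinner z z"
      by (simp only: complex_add_cnj complex_norm_square mult.commute[of "cnj t" t])
    finally have expand: "(norm (u + scaleC t z))^2 =
        (norm u)^2 + 2 * Re (t * a) + (cmod t)^2 * Re (cinner z z)"
      by (simp add: power2_norm_eq_cinner)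
    have t_s: "Re (t * a) = - Re (cnj s * a)" "cmod t = cmod s" unfolding t_def by simp_all
    have "(norm u)^2 \<le> (norm (u + scaleC t z))^2" using assms[of t] by (simp add: power_mono)
    then show "0 \<le> 0 - 2 * Re (cnj s * a) + (cmod s)^2 * Re (cinner z z)"
      using expand unfolding t_s by linarith
  qed
  then show ?thesis unfolding a_def by simp
qed

context
  fixes g :: "'a::chilbert_space \<Rightarrow> 'a" and F :: "'a \<Rightarrow> complex"
  assumes g_add: "\<And>x y. g (x + y) = g x + g y"
    and g_scaleC: "\<And>c x. g (scaleC c x) = scaleC c (g x)"
    and F_add: "\<And>x y. F (x + y) = F x + F y"
    and F_scaleC: "\<And>c x. F (scaleC c x) = c * F x"
begin

lemma convex_image_level_set: "convex (g ` {x. F x = 1})"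
proof -
  have "linear g" by (rule linearI) (simp_all add: g_add scaleR_scaleC g_scaleC)
  moreover have "F (scaleR r x) = complex_of_real r * F x" for r x by (simp add: scaleR_scaleC F_scaleC)
  then have "convex {x. F x = 1}"
    unfolding convex_def by (simp add: F_add) (metis of_real_1 of_real_add)
  ultimately show ?thesis by (rule convex_linear_image)
qed

lemma closure_image_level_set_translate:
  assumes "u \<in> closure (g ` {x. F x = 1})" "F n = 0"
  shows "u + g n \<in> closure (g ` {x. F x = 1})"
proof -
  let ?S = "g ` {x. F x = 1}"
  have "g n + g a \<in> ?S" if "F a = 1" for a
    using that \<open>F n = 0\<close> by (intro image_eqI[of _ g "n + a"]) (simp_all add: g_add F_add)
  then have "(+) (g n) ` ?S \<subseteq> ?S" by blast
  then have "(+) (g n) ` closure ?S \<subseteq> closure ?S" by (metis closure_mono closure_translation)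
  then show ?thesis using assms(1) by (auto simp: add.commute)
qed

lemma cinner_kernel_eq_0_if_norm_minimal:
  assumes "u \<in> closure (g ` {x. F x = 1})"
    and "\<And>w. w \<in> closure (g ` {x. F x = 1}) \<Longrightarrow> norm u \<le> norm w"
    and "F n = 0"
  shows "cinner (g n) u = 0"
proof (rule cinner_eq_0_if_norm_minimal)
  fix t
  have "u + g (scaleC t n) \<in> closure (g ` {x. F x = 1})"
    using assms(1,3) by (intro closure_image_level_set_translate) (simp_all add: F_scaleC)
  then show "norm u \<le> norm (u + scaleC t (g n))" using assms(2) by (simp add: g_scaleC)
qed

text \<open>The representing vector is a multiple of the minimal-norm point of the closure of
  g ` {x. F x = 1}, which is orthogonal to g applied to the kernel of F.\<close>

lemma riesz_representation_dominated:
  assumes dominated: "\<And>x. cmod (F x) \<le> c * norm (g x)" and "0 \<le> c"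
  shows "\<exists>v. (\<forall>x. F x = cinner (g x) v) \<and> norm v \<le> c"
proof (cases "\<forall>x. F x = 0")
  case True
  then show ?thesis using \<open>0 \<le> c\<close> by (intro exI[of _ 0]) simp
next
  case False
  then obtain x0 where "F x0 \<noteq> 0" by auto
  define x1 where "x1 = scaleC (inverse (F x0)) x0"
  have F_x1: "F x1 = 1" unfolding x1_def using \<open>F x0 \<noteq> 0\<close> by (simp add: F_scaleC)
  have g_diff: "g (x - y) = g x - g y" for x y by (metis g_add diff_add_cancel add_diff_cancel)
  have F_diff: "F (x - y) = F x - F y" for x y by (metis F_add diff_add_cancel add_diff_cancel)
  define S where "S = g ` {x. F x = 1}"
  have "S \<noteq> {}" unfolding S_def using F_x1 by blast
  then obtain u where u_in: "u \<in> closure S" and u_min: "\<And>w. w \<in> closure S \<Longrightarrow> norm u \<le> norm w"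
    using closed_convex_attains_min_norm[of "closure S"] convex_image_level_set unfolding S_def by auto
  have orth: "cinner (g n) u = 0" if "F n = 0" for n
    using u_in u_min that unfolding S_def by (rule cinner_kernel_eq_0_if_norm_minimal)
  have "S \<subseteq> {w. cinner w u = cinner (g x1) u}"
  proof
    fix w assume "w \<in> S"
    then obtain a where "w = g a" "F a = 1" unfolding S_def by blast
    then have "F (a - x1) = 0" by (simp add: F_diff F_x1)
    then have "cinner (g (a - x1)) u = 0" by (rule orth)
    then show "w \<in> {w. cinner w u = cinner (g x1) u}" using \<open>w = g a\<close> by (simp add: g_diff cinner_diff_left)
  qed
  moreover have "closed {w. cinner w u = cinner (g x1) u}"
    by (intro closed_Collect_eq linear_continuous_on bounded_linear_cinner_left continuous_on_const)
  ultimately have u_self: "cinner u u = cinner (g x1) u" using u_in closure_minimal by blast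
  have c_pos: "0 < c" using dominated[of x1] F_x1 \<open>0 \<le> c\<close> by (cases "c = 0") auto
  have "inverse c \<le> norm (g a)" if "F a = 1" for a
    using dominated[of a] that c_pos by (simp add: field_simps)
  then have "S \<subseteq> {w. inverse c \<le> norm w}" unfolding S_def by blast
  moreover have "closed {w. inverse c \<le> norm w}"
    by (intro closed_Collect_le continuous_on_const continuous_on_norm_id)
  ultimately have u_norm: "inverse c \<le> norm u" using u_in closure_minimal by blast
  then have u_pos: "0 < norm u" using c_pos by (meson inverse_positive_iff_positive less_le_trans)
  have rep: "cinner (g x) u = F x * complex_of_real ((norm u)^2)" for x
  proof -
    have "F (x - scaleC (F x) x1) = 0" by (simp add: F_diff F_scaleC F_x1)
    then have "cinner (g (x - scaleC (F x) x1)) u = 0" by (rule orth)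
    then have "cinner (g x) u = F x * cinner (g x1) u"
      by (simp add: g_diff g_scaleC cinner_diff_left cinner_scaleC_left)
    then show ?thesis using u_self by (simp add: cinner_self_eq_norm)
  qed
  define v where "v = scaleC (complex_of_real (inverse ((norm u)^2))) u"
  have "F x = cinner (g x) v" for x
    unfolding v_def using rep[of x] u_pos by (simp add: cinner_scaleC_right field_simps)
  moreover have "norm v \<le> c"
  proof -
    have "norm v = inverse (norm u)"
      unfolding v_def scaleR_scaleC[symmetric] using u_pos by (simp add: power2_eq_square)
    also have "\<dots> \<le> c" using le_imp_inverse_le[OF u_norm] c_pos by simp
    finally show ?thesis .
  qed
  ultimately show ?thesis by blast
qed

end

text \<open>Douglas' factorization lemma; with A = id it produces the adjoint.\<close>

lemma dominated_operator_factorization: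
  fixes A B :: "'a::chilbert_space \<Rightarrow> 'a"
  assumes "bounded_clinear A" "bounded_clinear B"
    and dominated: "\<And>x. norm (B x) \<le> c * norm (A x)" and "0 \<le> c"
  obtains V where "\<And>x y. cinner (B x) y = cinner (A x) (V y)" "\<And>y. norm (V y) \<le> c * norm y"
proof -
  have "\<exists>v. (\<forall>x. cinner (B x) y = cinner (A x) v) \<and> norm v \<le> c * norm y" for y
  proof (rule riesz_representation_dominated)
    show "\<And>x x'. A (x + x') = A x + A x'" "\<And>a x. A (scaleC a x) = scaleC a (A x)"
      using assms(1) by (simp_all add: bounded_clinear_add bounded_clinear_scaleC)
    show "\<And>x x'. cinner (B (x + x')) y = cinner (B x) y + cinner (B x') y"
      "\<And>a x. cinner (B (scaleC a x)) y = a * cinner (B x) y"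
      using assms(2) by (simp_all add: bounded_clinear_add bounded_clinear_scaleC cinner_add_left cinner_scaleC_left)
    show "0 \<le> c * norm y" using \<open>0 \<le> c\<close> by simp
    fix x
    have "cmod (cinner (B x) y) \<le> norm (B x) * norm y" by (rule cinner_Cauchy_Schwarz)
    also have "\<dots> \<le> c * norm (A x) * norm y" using dominated[of x] by (simp add: mult_right_mono)
    finally show "cmod (cinner (B x) y) \<le> c * norm y * norm (A x)" by (simp add: mult_ac)
  qed
  then have "\<forall>y. \<exists>v. (\<forall>x. cinner (B x) y = cinner (A x) v) \<and> norm v \<le> c * norm y" by blast
  from choice[OF this] obtain V where "\<forall>y. (\<forall>x. cinner (B x) y = cinner (A x) (V y)) \<and> norm (V y) \<le> c * norm y"
    by blast
  then show ?thesis using that by blast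
qed

lemma cadjoint_eqI:
  fixes T S :: "'a::complex_inner \<Rightarrow> 'a"
  assumes adj: "\<And>x y. cinner (T x) y = cinner x (S y)"
  shows "cadjoint T = S"
  unfolding cadjoint_def
proof (rule the_equality)
  show "\<forall>x y. cinner (T x) y = cinner x (S y)" using adj by blast
  fix S' assume adj': "\<forall>x y. cinner (T x) y = cinner x (S' y)"
  show "S' = S"
  proof
    fix y
    have "cinner x (S' y - S y) = 0" for x using adj adj' by (simp add: cinner_diff_right)
    then show "S' y = S y" using eq_0_if_orthogonal_to_all by fastforce
  qed
qed

lemma cadjoint_cinner:
  fixes T :: "'a::chilbert_space \<Rightarrow> 'a"
  assumes "bounded_clinear T"
  shows "cinner (T x) y = cinner x (cadjoint T y)"
proof -
  obtain S where "\<And>x y. cinner (T x) y = cinner (id x) (S y)"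
    using dominated_operator_factorization[OF bounded_clinear_id assms, of "onorm T"]
    by (metis assms id_apply norm_le_onorm onorm_nonneg)
  then have "\<And>x y. cinner (T x) y = cinner x (S y)" by simp
  then show ?thesis using cadjoint_eqI by metis
qed

lemma norm_cadjoint_le_if_hyponormal:
  fixes T S :: "'a::complex_inner \<Rightarrow> 'a"
  assumes adj: "\<And>x y. cinner (T x) y = cinner x (S y)" and "hyponormal T"
  shows "norm (S x) \<le> norm (T x)"
proof -
  have "0 \<le> Re (cinner (S (T x) - T (S x)) x)"
    using \<open>hyponormal T\<close> unfolding hyponormal_def positive_op_def cadjoint_eqI[OF adj] by simp
  moreover have "cinner (S (T x)) x = cinner (T x) (T x)"
    by (metis adj cinner_commute)
  moreover have "cinner (T (S x)) x = cinner (S x) (S x)" by (rule adj)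
  ultimately have "(norm (S x))^2 \<le> (norm (T x))^2"
    by (simp add: cinner_diff_left power2_norm_eq_cinner)
  then show ?thesis by (rule power2_le_imp_le) simp
qed

lemma norm_comp_le_if_hyponormal_cadjoint:
  fixes A K :: "'a::chilbert_space \<Rightarrow> 'a"
  assumes A: "bounded_clinear A" "positive_op A" and K: "bounded_clinear K"
    and hyponormal: "hyponormal (cadjoint (A \<circ> K))"
  shows "norm (A (K x)) \<le> onorm K * norm (A x)"
proof -
  define T where "T = cadjoint (A \<circ> K)"
  have adj: "cinner (A (K x)) y = cinner x (T y)" for x y
    using cadjoint_cinner[OF bounded_clinear_compose[OF A(1) K]] unfolding T_def by simp
  have "cinner (T x) y = cinner x (A (K y))" for x y
    by (metis adj cinner_commute)
  then have "norm (A (K x)) \<le> norm (T x)"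
    using norm_cadjoint_le_if_hyponormal[of T "A \<circ> K"] hyponormal unfolding T_def by simp
  also have "norm (T x) \<le> onorm K * norm (A x)"
  proof -
    have "(norm (T x))^2 = Re (cinner (K (T x)) (A x))"
      using adj[of "T x" x] positive_op_self_adjoint[OF A] by (simp add: power2_norm_eq_cinner)
    also have "\<dots> \<le> norm (K (T x)) * norm (A x)"
      using complex_Re_le_cmod cinner_Cauchy_Schwarz order_trans by blast
    also have "\<dots> \<le> onorm K * norm (T x) * norm (A x)"
      using norm_le_onorm[OF K] by (simp add: mult_right_mono)
    finally have "norm (T x) * norm (T x) \<le> norm (T x) * (onorm K * norm (A x))"
      by (simp add: power2_eq_square mult_ac)
    then show ?thesis using onorm_nonneg[OF K]
      by (cases "norm (T x) = 0") auto
  qed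
  finally show ?thesis .
qed

lemma log_convex_seq_geometric_lower_bound:
  fixes b :: "nat \<Rightarrow> real"
  assumes pos: "0 < b 0" "0 < b 1"
    and log_convex: "\<And>j. (b (Suc j))^2 \<le> b j * b (Suc (Suc j))"
  shows "b 0 * (b 1 / b 0)^n \<le> b n"
proof -
  define \<rho> where "\<rho> = b 1 / b 0"
  have \<rho>_pos: "0 < \<rho>" unfolding \<rho>_def using pos by simp
  have ratio: "\<rho> * b n \<le> b (Suc n) \<and> 0 < b n" for n
  proof (induction n)
    case 0
    then show ?case using pos unfolding \<rho>_def by simp
  next
    case (Suc n)
    then have "0 < b n" and ratio_n: "\<rho> * b n \<le> b (Suc n)" by auto
    then have b_Suc_pos: "0 < b (Suc n)" using \<rho>_pos by (meson mult_pos_pos less_le_trans)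
    have "b n * (\<rho> * b (Suc n)) = \<rho> * b n * b (Suc n)" by (simp add: mult_ac)
    also have "\<dots> \<le> b (Suc n) * b (Suc n)" using ratio_n b_Suc_pos by (simp add: mult_right_mono)
    also have "\<dots> \<le> b n * b (Suc (Suc n))" using log_convex[of n] by (simp add: power2_eq_square)
    finally have "\<rho> * b (Suc n) \<le> b (Suc (Suc n))" using \<open>0 < b n\<close> by simp
    then show ?case using b_Suc_pos by simp
  qed
  have "b 0 * \<rho>^n \<le> b n"
  proof (induction n)
    case (Suc n)
    have "b 0 * \<rho>^Suc n = \<rho> * (b 0 * \<rho>^n)" by (simp add: mult_ac)
    also have "\<dots> \<le> \<rho> * b n" using Suc \<rho>_pos by (simp add: mult_left_mono)
    also have "\<dots> \<le> b (Suc n)" using ratio[of n] by simp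
    finally show ?case .
  qed simp
  then show ?thesis unfolding \<rho>_def .
qed

lemma log_convex_seq_ratio_le:
  fixes b :: "nat \<Rightarrow> real"
  assumes nonneg: "\<And>j. 0 \<le> b j"
    and log_convex: "\<And>j. (b (Suc j))^2 \<le> b j * b (Suc (Suc j))"
    and bounded: "\<And>j. b j \<le> C * r^j" and "0 \<le> r"
  shows "b 1 \<le> r * b 0"
proof (cases "b 0 = 0 \<or> b 1 = 0")
  case True
  then show ?thesis using log_convex[of 0] nonneg[of 0] nonneg[of 1] \<open>0 \<le> r\<close> by auto
next
  case False
  then have pos: "0 < b 0" "0 < b 1" using nonneg[of 0] nonneg[of 1] by auto
  show ?thesis
  proof (rule ccontr)
    assume "\<not> ?thesis"
    then have r_lt: "r < b 1 / b 0" using pos by (simp add: field_simps)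
    show False
    proof (cases "r = 0")
      case True
      then show False using bounded[of 1] pos by simp
    next
      case False
      then have "0 < r" using \<open>0 \<le> r\<close> by simp
      then have "1 < (b 1 / b 0) / r" using r_lt by (simp only: less_divide_eq_1_pos)
      then obtain n where "C / b 0 < ((b 1 / b 0) / r)^n" using real_arch_pow by blast
      then have "C * r^n < b 0 * (b 1 / b 0)^n"
        using pos \<open>0 < r\<close> by (simp add: field_simps power_divide)
      also have "\<dots> \<le> b n" using pos log_convex by (rule log_convex_seq_geometric_lower_bound)
      also have "\<dots> \<le> C * r^n" by (rule bounded)
      finally show False by simp
    qed
  qed
qed

lemma norm_funpow_le:
  fixes P :: "'a::real_normed_vector \<Rightarrow> 'a"
  assumes bounded: "\<And>z. norm (P z) \<le> p * norm z" and "0 \<le> p"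
  shows "norm ((P^^j) x) \<le> p^j * norm x"
proof (induction j)
  case (Suc j)
  have "norm ((P^^Suc j) x) \<le> p * norm ((P^^j) x)" using bounded by simp
  also have "\<dots> \<le> p * (p^j * norm x)" using Suc \<open>0 \<le> p\<close> by (simp add: mult_left_mono)
  finally show ?case by (simp add: mult_ac)
qed simp

lemma Re_cinner_symmetric_le:
  fixes A P :: "'a::complex_inner \<Rightarrow> 'a"
  assumes A: "bounded_clinear A" "positive_op A"
    and symmetric: "\<And>u v. cinner (A (P u)) v = cinner (A u) (P v)"
    and bounded: "\<And>z. norm (P z) \<le> p * norm z" and "0 \<le> p"
  shows "Re (cinner (A (P x)) (P x)) \<le> p^2 * Re (cinner (A x) x)"
proof -
  define b where "b j = Re (cinner (A ((P^^j) x)) ((P^^j) x))" for j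
  have "b 1 \<le> p^2 * b 0"
  proof (rule log_convex_seq_ratio_le)
    show "0 \<le> b j" for j unfolding b_def using A(2) by (rule positive_op_Re_nonneg)
    show "0 \<le> p^2" by simp
    show "(b (Suc j))^2 \<le> b j * b (Suc (Suc j))" for j
    proof -
      define u where "u = (P^^j) x"
      define w where "w = (P^^Suc (Suc j)) x"
      have "b (Suc j) = Re (cinner (A u) w)"
        unfolding b_def u_def w_def by (simp add: symmetric)
      then have "\<bar>b (Suc j)\<bar> \<le> cmod (cinner (A u) w)" by (simp add: abs_Re_le_cmod)
      then have "(b (Suc j))^2 \<le> (cmod (cinner (A u) w))^2" by (metis abs_ge_zero power2_abs power_mono)
      also have "\<dots> \<le> b j * b (Suc (Suc j))"
        unfolding b_def u_def w_def by (rule positive_op_Cauchy_Schwarz[OF A])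
      finally show ?thesis .
    qed
    show "b j \<le> (onorm A * (norm x)^2) * (p^2)^j" for j
    proof -
      have "b j \<le> onorm A * (norm ((P^^j) x))^2" unfolding b_def by (rule Re_cinner_le_onorm[OF A(1)])
      also have "\<dots> \<le> onorm A * (p^j * norm x)^2"
        using norm_funpow_le[OF bounded \<open>0 \<le> p\<close>, of j x] onorm_nonneg[OF A(1)] by (simp add: mult_left_mono power_mono)
      finally show ?thesis by (simp add: power_mult_distrib power_mult[symmetric] mult_ac)
    qed
  qed
  then show ?thesis unfolding b_def by simp
qed

lemma cmod_cinner_le_if_Re_cinner_le:
  fixes A :: "'a::complex_inner \<Rightarrow> 'a"
  assumes A: "bounded_clinear A" "positive_op A"
    and le: "Re (cinner (A y) y) \<le> k^2 * Re (cinner (A x) x)" and "0 \<le> k"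
  shows "cmod (cinner (A y) x) \<le> k * Re (cinner (A x) x)"
proof -
  have nonneg: "0 \<le> Re (cinner (A x) x)" using A(2) by (rule positive_op_Re_nonneg)
  have "(cmod (cinner (A y) x))^2 \<le> Re (cinner (A y) y) * Re (cinner (A x) x)"
    by (rule positive_op_Cauchy_Schwarz[OF A])
  also have "\<dots> \<le> k^2 * Re (cinner (A x) x) * Re (cinner (A x) x)"
    using le nonneg by (rule mult_right_mono)
  also have "\<dots> = (k * Re (cinner (A x) x))^2" by (simp add: power2_eq_square mult_ac)
  finally show ?thesis by (rule power2_le_imp_le) (use nonneg \<open>0 \<le> k\<close> in simp)
qed

lemma Re_cinner_comp_le_if_norm_comp_le:
  fixes A K :: "'a::chilbert_space \<Rightarrow> 'a"
  assumes A: "bounded_clinear A" "positive_op A" and K: "bounded_clinear K"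
    and dominated: "\<And>x. norm (A (K x)) \<le> c * norm (A x)" and "0 \<le> c"
  shows "Re (cinner (A (K x)) (K x)) \<le> c * onorm K * Re (cinner (A x) x)"
proof -
  obtain V where V: "\<And>x y. cinner (A (K x)) y = cinner (A x) (V y)"
    and V_bound: "\<And>y. norm (V y) \<le> c * norm y"
    using dominated_operator_factorization[OF A(1) bounded_clinear_compose[OF A(1) K]] dominated \<open>0 \<le> c\<close>
    by (metis comp_apply)
  define P where "P = V \<circ> K" \<comment> \<open>A P = K^* A K, whence the symmetry below\<close>
  have symmetric: "cinner (A (P u)) v = cinner (A u) (P v)" for u v
  proof -
    have "cinner (A (P u)) v = cnj (cinner (A v) (V (K u)))"
      unfolding P_def using positive_op_self_adjoint[OF A] cinner_commute by (metis comp_apply)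
    also have "\<dots> = cinner (K u) (A (K v))" by (metis V cinner_commute)
    also have "\<dots> = cinner (A u) (P v)"
      unfolding P_def using positive_op_self_adjoint[OF A] V by (metis comp_apply)
    finally show ?thesis .
  qed
  have P_bound: "norm (P z) \<le> (c * onorm K) * norm z" for z
  proof -
    have "norm (P z) \<le> c * norm (K z)" unfolding P_def by (simp add: V_bound)
    also have "\<dots> \<le> c * (onorm K * norm z)" using norm_le_onorm[OF K] \<open>0 \<le> c\<close> by (rule mult_left_mono)
    finally show ?thesis by (simp add: mult_ac)
  qed
  have "cinner (A (K x)) (K x) = cinner (A x) (P x)" unfolding P_def by (simp add: V)
  also have "\<dots> = cinner (A (P x)) x" by (rule symmetric[symmetric])
  finally have "Re (cinner (A (K x)) (K x)) \<le> cmod (cinner (A (P x)) x)" by (simp add: complex_Re_le_cmod)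
  also have "\<dots> \<le> c * onorm K * Re (cinner (A x) x)"
    using A Re_cinner_symmetric_le[OF A symmetric P_bound] \<open>0 \<le> c\<close> onorm_nonneg[OF K]
    by (intro cmod_cinner_le_if_Re_cinner_le) simp_all
  finally show ?thesis .
qed

theorem mainTheorem1:
  fixes A K :: "'a::chilbert_space \<Rightarrow> 'a"
  assumes "bounded_clinear A" and "bounded_clinear K"
    and "positive_op A"
    and "hyponormal (cadjoint (A \<circ> K))"
  shows "\<forall>x. cmod (cinner (A (K x)) x) \<le> onorm K * Re (cinner (A x) x)"
proof
  fix x
  have "norm (A (K z)) \<le> onorm K * norm (A z)" for z
    using assms by (intro norm_comp_le_if_hyponormal_cadjoint)
  then have "Re (cinner (A (K x)) (K x)) \<le> (onorm K)^2 * Re (cinner (A x) x)"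
    using Re_cinner_comp_le_if_norm_comp_le assms onorm_nonneg
    by (metis power2_eq_square)
  then show "cmod (cinner (A (K x)) x) \<le> onorm K * Re (cinner (A x) x)"
    using assms onorm_nonneg by (intro cmod_cinner_le_if_Re_cinner_le)
qed

end
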